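(* Let $h,h'$ be decision trees, $i$ a leaf of $h$ and $j$ a leaf of $h'$ with $l_{h,i}\ne l_{h',j}$. Let $S$ be a finite dataset and $S_i=\{x\in S:\mathrm{LineTree}_{h,i}(x)=l_{h,i}\}$ (assumed nonempty). Then $D_{S_i}(\mathrm{LineTree}_{h,i},\mathrm{LineTree}_{h',j})\le D_{S_i}(h,h')$.
   Context: A decision tree routes a point from the root; each internal node compares one coordinate with a threshold, each leaf carries a label. For a tree $h$ and leaf $i$, $l_{h,i}\in\{0,1\}$ is the label of leaf $i$, and $\mathrm{LineTree}_{h,i}$ is the classifier assigning label $l_{h,i}$ to all inputs that reach leaf $i$ in $h$ and label $1-l_{h,i}$ to all other inputs. $D_T(f,g)=\frac1{|T|}\sum_{x\in T}\mathbb{I}(f(x)\ne g(x))$. *)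

theory Defs
  imports Complex_Main
begin

text \<open>Labels in {0,1} are encoded as bool (\<open>1 - l\<close> becomes \<open>\<not> l\<close>).\<close>
datatype dtree = Leaf bool | Node nat real dtree dtree

text \<open>A leaf is identified by its path from the root (False = left, True = right).\<close>
fun route :: "dtree \<Rightarrow> (nat \<Rightarrow> real) \<Rightarrow> bool list" where
  "route (Leaf _) x = []"
| "route (Node k t l r) x = (if x k \<le> t then False # route l x else True # route r x)"

fun leaves :: "dtree \<Rightarrow> bool list set" where
  "leaves (Leaf _) = {[]}"
| "leaves (Node _ _ l r) = Cons False ` leaves l \<union> Cons True ` leaves r"

fun leaf_label :: "dtree \<Rightarrow> bool list \<Rightarrow> bool" where
  "leaf_label (Leaf b) _ = b"
| "leaf_label (Node _ _ l r) [] = False"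
| "leaf_label (Node _ _ l r) (d # p) = (if d then leaf_label r p else leaf_label l p)"

definition classify :: "dtree \<Rightarrow> (nat \<Rightarrow> real) \<Rightarrow> bool" where
  "classify h x = leaf_label h (route h x)"

definition LineTree :: "dtree \<Rightarrow> bool list \<Rightarrow> (nat \<Rightarrow> real) \<Rightarrow> bool" where
  "LineTree h i x = (if route h x = i then leaf_label h i else \<not> leaf_label h i)"

definition disagree :: "('x set) \<Rightarrow> ('x \<Rightarrow> bool) \<Rightarrow> ('x \<Rightarrow> bool) \<Rightarrow> real" where
  "disagree T f g = (\<Sum>x\<in>T. if f x \<noteq> g x then 1 else 0) / real (card T)"

end

theory Submission
  imports Defs
begin

text \<open>A point of \<open>S\<^sub>i\<close> is exactly a point routed to leaf \<open>i\<close>, where \<open>LineTree\<^sub>h\<^sub>,\<^sub>i\<close> and \<open>h\<close>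
  both output \<open>l\<^sub>h\<^sub>,\<^sub>i\<close>. Since \<open>l\<^sub>h\<^sub>',\<^sub>j = \<not> l\<^sub>h\<^sub>,\<^sub>i\<close>, the line tree \<open>LineTree\<^sub>h\<^sub>'\<^sub>,\<^sub>j\<close> also outputs
  \<open>l\<^sub>h\<^sub>,\<^sub>i\<close> unless the point reaches leaf \<open>j\<close> of \<open>h'\<close>, and then \<open>h'\<close> outputs \<open>l\<^sub>h\<^sub>',\<^sub>j\<close> too. So
  every disagreement of the two line trees on \<open>S\<^sub>i\<close> is a disagreement of \<open>h\<close> and \<open>h'\<close>.\<close>

lemma disagree_mono:
  assumes "\<And>x. x \<in> T \<Longrightarrow> f x \<noteq> g x \<Longrightarrow> f' x \<noteq> g' x"
  shows "disagree T f g \<le> disagree T f' g'"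
proof -
  have "(\<Sum>x\<in>T. if f x \<noteq> g x then 1 else 0 :: real) \<le> (\<Sum>x\<in>T. if f' x \<noteq> g' x then 1 else 0)"
    using assms by (intro sum_mono) auto
  then show ?thesis
    unfolding disagree_def by (simp add: divide_right_mono)
qed

lemma LineTree_eq_leaf_label_iff: "LineTree h i x = leaf_label h i \<longleftrightarrow> route h x = i"
  by (simp add: LineTree_def)

lemma LineTree_disagree_imp_classify_disagree:
  assumes "route h x = i"
    and "leaf_label h i \<noteq> leaf_label h' j"
    and "LineTree h i x \<noteq> LineTree h' j x"
  shows "classify h x \<noteq> classify h' x"
proof -
  have "LineTree h' j x \<noteq> leaf_label h i"
    using assms by (simp add: LineTree_def)
  then have "route h' x = j"
    using assms(2) by (auto simp: LineTree_def split: if_splits)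
  then show ?thesis
    using assms(1,2) by (simp add: classify_def)
qed

theorem lemma19:
  fixes h h' :: dtree and i j :: "bool list" and S :: "(nat \<Rightarrow> real) set"
  assumes "i \<in> leaves h" and "j \<in> leaves h'"
    and "leaf_label h i \<noteq> leaf_label h' j"
    and "finite S"
    and "{x \<in> S. LineTree h i x = leaf_label h i} \<noteq> {}"
  shows "disagree {x \<in> S. LineTree h i x = leaf_label h i} (LineTree h i) (LineTree h' j)
         \<le> disagree {x \<in> S. LineTree h i x = leaf_label h i} (classify h) (classify h')"
  using LineTree_disagree_imp_classify_disagree[OF _ assms(3)]
  by (intro disagree_mono) (simp add: LineTree_eq_leaf_label_iff)

end
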